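(* Let $n>(p+s)^4$ be an integer. Then $\rho_1 := \sum_{k=1}^{n} r_{1,k}=0$.
   Context: Let $p\geqslant 5$ be a prime and $s$ a positive integer. Write $v_p$ for the $p$-adic valuation and $(\alpha)_k=\alpha(\alpha+1)\cdots(\alpha+k-1)$. Put $N_0=v_p(p-1+s)$ and $M_0=p^{2+N_0}s-1$. For an integer $n>(p+s)^4$ let \[R_n(t)=p^{pn}\, n!^s\, t^{M_0}\,\frac{\prod_{j=1}^{p-1}(t+\frac{j}{p})_n}{(t)_{n+1}^{p-1+s}}\in\mathbb{Q}(t),\] with partial fraction decomposition $R_n(t)=\sum_{i=1}^{p-1+s}\sum_{k=1}^{n} r_{i,k}(t+k)^{-i}$, $r_{i,k}\in\mathbb{Q}$. *)

theory Defs
  imports Complex_Main "HOL-Computational_Algebra.Primes"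
begin

definition N0 :: "nat \<Rightarrow> nat \<Rightarrow> nat" where
  "N0 p s = multiplicity p (p - 1 + s)"

definition M0 :: "nat \<Rightarrow> nat \<Rightarrow> nat" where
  "M0 p s = p ^ (2 + N0 p s) * s - 1"

definition Rfun :: "nat \<Rightarrow> nat \<Rightarrow> nat \<Rightarrow> rat \<Rightarrow> rat" where
  "Rfun p s n t =
     of_nat p ^ (p * n) * (fact n) ^ s * t ^ (M0 p s) *
     (\<Prod>j=1..p-1. pochhammer (t + of_nat j / of_nat p) n) /
     (pochhammer t (n + 1)) ^ (p - 1 + s)"

end

theory Submission
  imports Defs
begin

text \<open>
  Since \<open>p ^ N0 \<le> p - 1 + s\<close>, the hypothesis on \<open>n\<close> gives \<open>M0 < n s\<close>, so the degree
  \<open>M0 + n (p - 1) - (n + 1) (p - 1 + s)\<close> of \<open>R_n\<close> is at most \<open>-2\<close> and \<open>t R_n(t) \<rightarrow> 0\<close> as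
  \<open>t \<rightarrow> \<infinity>\<close>. On the partial fraction side, \<open>t r_{i,k} / (t + k)^i\<close> tends to \<open>r_{1,k}\<close> for
  \<open>i = 1\<close> and to \<open>0\<close> for \<open>i \<ge> 2\<close>, so \<open>t R_n(t) \<rightarrow> \<rho>_1\<close>. Hence \<open>\<rho>_1 = 0\<close>.
\<close>

lemma tendsto_pochhammer_div_power:
  "((\<lambda>x::real. pochhammer (x + b) n / x ^ n) \<longlongrightarrow> 1) at_top"
proof -
  have "((\<lambda>x::real. \<Prod>i<n. 1 + (b + real i) / x) \<longlongrightarrow> (\<Prod>i<n. 1 + 0)) at_top"
    by (intro tendsto_intros tendsto_divide_0[OF tendsto_const] filterlim_at_top_imp_at_infinity
        filterlim_ident)
  moreover have "\<forall>\<^sub>F x in at_top. (\<Prod>i<n. 1 + (b + real i) / x) = pochhammer (x + b) n / x ^ n"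
    using eventually_gt_at_top[of 0]
  proof eventually_elim
    case (elim x)
    have "(\<Prod>i<n. 1 + (b + real i) / x) = (\<Prod>i<n. (x + b + real i) / x)"
      using elim by (intro prod.cong) (auto simp: field_simps)
    then show ?case by (simp add: pochhammer_prod atLeast0LessThan prod_dividef)
  qed
  ultimately show ?thesis by (simp add: tendsto_cong)
qed

lemma tendsto_mult_partial_fraction:
  fixes a c :: real
  assumes "i \<ge> 1"
  shows "((\<lambda>x. x * (c / (x + a) ^ i)) \<longlongrightarrow> (if i = 1 then c else 0)) at_top"
proof -
  have "filterlim (\<lambda>x. x + a) at_top at_top"
    using filterlim_tendsto_add_at_top[OF tendsto_const[of a] filterlim_ident]
    by (simp add: add.commute)
  then have inv: "((\<lambda>x. 1 / (x + a)) \<longlongrightarrow> 0) at_top"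
    by (intro tendsto_divide_0[OF tendsto_const] filterlim_at_top_imp_at_infinity)
  have "((\<lambda>x. 1 - a * (1 / (x + a))) \<longlongrightarrow> 1 - a * 0) at_top"
    by (intro tendsto_intros inv)
  moreover have "\<forall>\<^sub>F x in at_top. 1 - a * (1 / (x + a)) = x / (x + a)"
    using eventually_gt_at_top[of "-a"] by eventually_elim (simp add: field_simps)
  ultimately have ratio: "((\<lambda>x. x / (x + a)) \<longlongrightarrow> 1) at_top"
    by (simp add: tendsto_cong)
  have "((\<lambda>x. c * (x / (x + a)) * (1 / (x + a)) ^ (i - 1)) \<longlongrightarrow> c * 1 * 0 ^ (i - 1)) at_top"
    by (intro tendsto_intros ratio inv)
  moreover have "\<forall>\<^sub>F x in at_top. c * (x / (x + a)) * (1 / (x + a)) ^ (i - 1) = x * (c / (x + a) ^ i)"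
    using eventually_gt_at_top[of "-a"]
  proof eventually_elim
    case (elim x)
    have "(x + a) ^ i = (x + a) * (x + a) ^ (i - 1)"
      using assms by (simp add: power_eq_if)
    then show ?case using elim by (simp add: field_simps power_one_over)
  qed
  ultimately have "((\<lambda>x. x * (c / (x + a) ^ i)) \<longlongrightarrow> c * 1 * 0 ^ (i - 1)) at_top"
    by (rule Lim_transform_eventually)
  moreover have "c * 1 * 0 ^ (i - 1) = (if i = 1 then c else 0)"
    using assms by simp
  ultimately show ?thesis by simp
qed

lemma tendsto_mult_partial_fractions:
  fixes a :: "'k \<Rightarrow> real" and c :: "nat \<Rightarrow> 'k \<Rightarrow> real"
  assumes "q \<ge> 1"
  shows "((\<lambda>x. x * (\<Sum>i=1..q. \<Sum>k\<in>K. c i k / (x + a k) ^ i)) \<longlongrightarrow> (\<Sum>k\<in>K. c 1 k)) at_top"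
proof -
  have "((\<lambda>x. \<Sum>i=1..q. \<Sum>k\<in>K. x * (c i k / (x + a k) ^ i))
      \<longlongrightarrow> (\<Sum>i=1..q. \<Sum>k\<in>K. if i = 1 then c i k else 0)) at_top"
    by (intro tendsto_sum tendsto_mult_partial_fraction) auto
  also have "(\<Sum>i=1..q. \<Sum>k\<in>K. if i = 1 then c i k else 0) = (\<Sum>k\<in>K. c 1 k)"
    using assms by (subst sum.swap) (simp add: sum.delta)
  finally show ?thesis by (simp add: sum_distrib_left)
qed

lemma tendsto_pochhammer_quotient_0:
  fixes b :: "'j \<Rightarrow> real"
  assumes "finite J" and "a + card J * n < (n + 1) * q"
  shows "((\<lambda>x. x ^ a * (\<Prod>j\<in>J. pochhammer (x + b j) n) / pochhammer x (n + 1) ^ q)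
    \<longlongrightarrow> 0) at_top"
proof -
  define e where "e = (n + 1) * q - (a + card J * n) - 1"
  have e: "(n + 1) * q = a + card J * n + Suc e"
    using assms(2) unfolding e_def by linarith
  have denominator: "((\<lambda>x::real. pochhammer x (n + 1) / x ^ (n + 1)) \<longlongrightarrow> 1) at_top"
    using tendsto_pochhammer_div_power[of 0 "n + 1"] by simp
  have inverse: "((\<lambda>x::real. 1 / x) \<longlongrightarrow> 0) at_top"
    by (intro tendsto_divide_0[OF tendsto_const] filterlim_at_top_imp_at_infinity filterlim_ident)
  have "((\<lambda>x. (\<Prod>j\<in>J. pochhammer (x + b j) n / x ^ n)
      / (pochhammer x (n + 1) / x ^ (n + 1)) ^ q * (1 / x) ^ Suc e) \<longlongrightarrow> (\<Prod>j\<in>J. 1) / 1 ^ q * 0 ^ Suc e) at_top"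
    by (intro tendsto_mult tendsto_divide tendsto_prod tendsto_power tendsto_pochhammer_div_power
        denominator inverse)
      simp_all
  moreover have "\<forall>\<^sub>F x in at_top. (\<Prod>j\<in>J. pochhammer (x + b j) n / x ^ n)
      / (pochhammer x (n + 1) / x ^ (n + 1)) ^ q * (1 / x) ^ Suc e = x ^ a * (\<Prod>j\<in>J. pochhammer (x + b j) n) / pochhammer x (n + 1) ^ q"
    using eventually_gt_at_top[of 0]
  proof eventually_elim
    case (elim x)
    have "x ^ ((n + 1) * q) = x ^ a * (x ^ n) ^ card J * x ^ Suc e"
      unfolding e by (simp add: power_add power_mult mult.commute)
    moreover have "(\<Prod>j\<in>J. pochhammer (x + b j) n / x ^ n)
        = (\<Prod>j\<in>J. pochhammer (x + b j) n) / (x ^ n) ^ card J"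
      by (simp add: prod_dividef)
    moreover have "(pochhammer x (n + 1) / x ^ (n + 1)) ^ q
        = pochhammer x (n + 1) ^ q / x ^ ((n + 1) * q)"
      by (simp only: power_divide power_mult)
    moreover have "P / y / (D / (z * y * w)) * (1 / w) = z * P / D" if "y \<noteq> 0" "w \<noteq> 0" "D \<noteq> 0"
      for P y z w D :: real
      using that by (simp add: field_simps)
    ultimately show ?case
      using elim pochhammer_pos[of x "n + 1"] by (simp add: power_one_over)
  qed
  ultimately have "((\<lambda>x. x ^ a * (\<Prod>j\<in>J. pochhammer (x + b j) n) / pochhammer x (n + 1) ^ q)
      \<longlongrightarrow> (\<Prod>j\<in>J. 1) / 1 ^ q * 0 ^ Suc e) at_top"
    by (rule Lim_transform_eventually)
  then show ?thesis by simp
qed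

lemma M0_less:
  assumes "s > 0" and "(p + s) ^ 4 < n"
  shows "M0 p s < n * s"
proof -
  have "p ^ N0 p s \<le> p - 1 + s"
    unfolding N0_def using assms(1) by (intro dvd_imp_le multiplicity_dvd) auto
  have "M0 p s \<le> p ^ 2 * p ^ N0 p s * s"
    unfolding M0_def by (simp add: power_add power2_eq_square)
  also have "\<dots> \<le> p ^ 2 * (p - 1 + s) * s"
    using \<open>p ^ N0 p s \<le> p - 1 + s\<close> by (intro mult_mono) auto
  also have "\<dots> \<le> (p + s) ^ 2 * (p + s) * (p + s)"
    by (intro mult_mono power_mono) auto
  also have "\<dots> = (p + s) ^ 4"
    by (simp add: power_numeral_reduce)
  also have "\<dots> < n"
    by (fact assms(2))
  also have "n \<le> n * s"
    using assms(1) by simp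
  finally show ?thesis .
qed

lemma of_rat_fact: "of_rat (fact n) = fact n"
  by (metis of_nat_fact of_rat_of_nat_eq)

lemma of_rat_pochhammer: "of_rat (pochhammer x n) = pochhammer (of_rat x) n"
  by (simp add: pochhammer_prod of_rat_prod of_rat_add)

lemma tendsto_mult_Rfun_0:
  assumes "s > 0" and "(p + s) ^ 4 < n"
  shows "(\<lambda>m. real m * real_of_rat (Rfun p s n (of_nat m))) \<longlonglongrightarrow> 0"
proof -
  have "(n + 1) * (p - 1 + s) = (p - 1) * n + n * s + (p - 1 + s)"
    by (simp only: add_mult_distrib add_mult_distrib2 mult_1 mult_1_right ac_simps)
  then have "M0 p s + 1 + card {1..p-1} * n < (n + 1) * (p - 1 + s)"
    using M0_less[OF assms] assms(1) by simp
  then have "((\<lambda>x. real p ^ (p * n) * fact n ^ s * (x ^ (M0 p s + 1) *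
      (\<Prod>j=1..p-1. pochhammer (x + real j / real p) n) / pochhammer x (n + 1) ^ (p - 1 + s)))
      \<longlongrightarrow> real p ^ (p * n) * fact n ^ s * 0) at_top"
    by (intro tendsto_mult tendsto_const tendsto_pochhammer_quotient_0) auto
  from filterlim_compose[OF this filterlim_real_sequentially] show ?thesis
    by (simp add: Rfun_def of_rat_mult of_rat_divide of_rat_power of_rat_prod of_rat_pochhammer
        of_rat_add of_rat_fact mult_ac)
qed

theorem lemma4p1:
  fixes p s n :: nat and r :: "nat \<Rightarrow> nat \<Rightarrow> rat"
  assumes "prime p" and "p \<ge> 5" and "s > 0"
    and "n > (p + s) ^ 4"
    and pfd: "\<And>t::rat. (\<forall>k\<in>{0..n}. t \<noteq> - of_nat k) \<Longrightarrow>
        Rfun p s n t = (\<Sum>i=1..p-1+s. \<Sum>k=1..n. r i k / (t + of_nat k) ^ i)"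
  shows "(\<Sum>k=1..n. r 1 k) = 0"
proof -
  define S where "S t = (\<Sum>i=1..p-1+s. \<Sum>k=1..n. r i k / (t + of_nat k) ^ i)" for t
  have "((\<lambda>x. x * (\<Sum>i=1..p-1+s. \<Sum>k=1..n. real_of_rat (r i k) / (x + real k) ^ i))
      \<longlongrightarrow> (\<Sum>k=1..n. real_of_rat (r 1 k))) at_top"
    using assms(3) by (intro tendsto_mult_partial_fractions) simp
  from filterlim_compose[OF this filterlim_real_sequentially]
  have "(\<lambda>m. real m * real_of_rat (S (of_nat m))) \<longlonglongrightarrow> real_of_rat (\<Sum>k=1..n. r 1 k)"
    by (simp add: S_def of_rat_sum of_rat_divide of_rat_power of_rat_add)
  moreover have "\<forall>\<^sub>F m in sequentially.
      real m * real_of_rat (S (of_nat m)) = real m * real_of_rat (Rfun p s n (of_nat m))"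
    using eventually_gt_at_top[of 0] by eventually_elim (simp add: pfd S_def)
  ultimately have "(\<lambda>m. real m * real_of_rat (Rfun p s n (of_nat m)))
      \<longlonglongrightarrow> real_of_rat (\<Sum>k=1..n. r 1 k)"
    by (rule Lim_transform_eventually)
  with tendsto_mult_Rfun_0[OF assms(3,4)] show ?thesis
    using LIMSEQ_unique by fastforce
qed

end
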